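(* Let $\gamma>0$, $\Omega=(0,\pi)$, and let $\mathcal{W}$ be the generator of the weakly coupled thermoelastic system, acting on $\mathcal{H}=L^2(\Omega)^3$ by \[ \mathcal{W}\begin{pmatrix} w\\ v\\ \theta\end{pmatrix}=\begin{pmatrix} \partial_x v\\ \partial_x w-\gamma\theta\\ \gamma v+\partial_x^2\theta\end{pmatrix}, \] where $(w,v,\theta)=(\partial_x u,\partial_t u,\theta)$, with domain encoding any one of the following boundary conditions at $x=0,\pi$: (1) $u=0$ and $\theta=0$; (2) $u=0$ and $\partial_x\theta=0$; (3) $\partial_x u=0$ and $\theta=0$; (4) $\partial_x u=0$ and $\partial_x\theta=0$. Then, for each of these four boundary conditions, the spectrum of $\mathcal{W}$ asymptotically lies along the imaginary axis and the negative real axis: every eigenvalue $\lambda$ of $\mathcal{W}$ with sufficiently large $|\lambda|$ satisfies \[ \lambda\sim i n\qquad\text{or}\qquad \lambda\sim -n^{2} \] for some large integer $n$.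
   Context: This operator corresponds to the weakly coupled thermoelastic system $\partial_t^2u-\partial_x^2u+\gamma\theta=0$, $\partial_t\theta-\partial_x^2\theta-\gamma\partial_t u=0$ on $(0,\pi)\times(0,\infty)$. The spectrum of $\mathcal{W}$ consists of eigenvalues only ($\mathcal{W}^{-1}$ is compact). The notation $\lambda\sim \mu_n$ means that $\lambda$ is asymptotically equal to $\mu_n$ as $|\lambda|\to\infty$. *)

theory Defs
  imports "HOL-Analysis.Analysis"
begin

text \<open>The four boundary conditions at x = 0 and x = pi, written for the state
  (w, v, theta) = (u_x, u_t, theta):
  BC1: u = 0 and theta = 0        (i.e. v = 0, theta = 0)
  BC2: u = 0 and theta_x = 0      (i.e. v = 0, theta' = 0)
  BC3: u_x = 0 and theta = 0      (i.e. w = 0, theta = 0)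
  BC4: u_x = 0 and theta_x = 0    (i.e. w = 0, theta' = 0)\<close>

datatype thermo_bc = BC1 | BC2 | BC3 | BC4

definition thermo_boundary ::
  "thermo_bc \<Rightarrow> (real \<Rightarrow> complex) \<Rightarrow> (real \<Rightarrow> complex) \<Rightarrow> (real \<Rightarrow> complex)
     \<Rightarrow> (real \<Rightarrow> complex) \<Rightarrow> bool" where
  "thermo_boundary b w v th th' =
     (case b of
        BC1 \<Rightarrow> v 0 = 0 \<and> v pi = 0 \<and> th 0 = 0 \<and> th pi = 0
      | BC2 \<Rightarrow> v 0 = 0 \<and> v pi = 0 \<and> th' 0 = 0 \<and> th' pi = 0
      | BC3 \<Rightarrow> w 0 = 0 \<and> w pi = 0 \<and> th 0 = 0 \<and> th pi = 0
      | BC4 \<Rightarrow> w 0 = 0 \<and> w pi = 0 \<and> th' 0 = 0 \<and> th' pi = 0)"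

text \<open>Eigenfunctions of W are smooth (ODE regularity), so the
  eigenvalue problem is stated for classical solutions on the closed interval.\<close>

definition thermo_eigenvalue :: "real \<Rightarrow> thermo_bc \<Rightarrow> complex \<Rightarrow> bool" where
  "thermo_eigenvalue \<gamma> b mu \<longleftrightarrow>
     (\<exists>w v th w' v' th' th''.
        (\<forall>x\<in>{0..pi}.
            (w has_vector_derivative w' x) (at x within {0..pi}) \<and>
            (v has_vector_derivative v' x) (at x within {0..pi}) \<and>
            (th has_vector_derivative th' x) (at x within {0..pi}) \<and>
            (th' has_vector_derivative th'' x) (at x within {0..pi}) \<and>
            v' x = mu * w x \<and>
            w' x - complex_of_real \<gamma> * th x = mu * v x \<and>
            complex_of_real \<gamma> * v x + th'' x = mu * th x) \<and>
        thermo_boundary b w v th th' \<and>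
        (\<exists>x\<in>{0..pi}. w x \<noteq> 0 \<or> v x \<noteq> 0 \<or> th x \<noteq> 0))"

end

(*
  Integrating (w cnj v)' and (\<theta>' cnj \<theta>)' over [0, pi] (the boundary terms vanish under each of
  the four boundary conditions) turns the eigenvalue equations into the energy identities
    mu |v|^2 + cnj mu |w|^2 + \<gamma> <\<theta>, v> = 0,     |\<theta>'|^2 + mu |\<theta>|^2 - \<gamma> <v, \<theta>> = 0.
  Unless mu or mu^2 lies in a thin sector around the negative real axis, the real or imaginary
  parts of mu times the first identity and of the second give c |mu| |v|^2 <= |\<gamma>| |<\<theta>, v>|
  and c |mu| |\<theta>|^2 <= |\<gamma>| |<v, \<theta>>|; for c |mu| > |\<gamma>| this forces v = \<theta> = 0 and
  then w = 0. So large eigenvalues lie in thin sectors around the imaginary axis or the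
  negative real axis, and far out such sectors are relatively close to i n, resp. to -n^2.
*)
theory Submission
  imports Defs
begin

definition L2_inner :: "real set \<Rightarrow> (real \<Rightarrow> complex) \<Rightarrow> (real \<Rightarrow> complex) \<Rightarrow> complex" where
  "L2_inner S f g = integral S (\<lambda>x. f x * cnj (g x))"

definition L2_norm2 :: "real set \<Rightarrow> (real \<Rightarrow> complex) \<Rightarrow> real" where
  "L2_norm2 S f = integral S (\<lambda>x. (cmod (f x))\<^sup>2)"

lemma L2_norm2_nonneg: "0 \<le> L2_norm2 S f"
  unfolding L2_norm2_def
  by (cases "(\<lambda>x. (cmod (f x))\<^sup>2) integrable_on S")
     (simp_all add: integral_nonneg not_integrable_integral)

lemma has_integral_L2_inner:
  assumes "continuous_on {a..b} f" "continuous_on {a..b} g"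
  shows "((\<lambda>x. f x * cnj (g x)) has_integral L2_inner {a..b} f g) {a..b}"
  unfolding L2_inner_def
  by (intro integrable_integral integrable_continuous_real continuous_intros assms)

lemma L2_inner_self:
  assumes "continuous_on {a..b} f"
  shows "L2_inner {a..b} f f = of_real (L2_norm2 {a..b} f)"
proof -
  have "(\<lambda>x. (cmod (f x))\<^sup>2) integrable_on {a..b}"
    by (intro integrable_continuous_real continuous_intros assms)
  from has_integral_of_real[OF integrable_integral[OF this], where 'b=complex]
  show ?thesis
    unfolding L2_inner_def L2_norm2_def complex_norm_square by (rule integral_unique)
qed

lemma L2_inner_norm_le:
  assumes f: "continuous_on {a..b} f" and g: "continuous_on {a..b} g"
  shows "cmod (L2_inner {a..b} f g) \<le> (L2_norm2 {a..b} f + L2_norm2 {a..b} g) / 2"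
proof -
  have sq: "(\<lambda>x. (cmod (f x))\<^sup>2) integrable_on {a..b}" "(\<lambda>x. (cmod (g x))\<^sup>2) integrable_on {a..b}"
    by (intro integrable_continuous_real continuous_intros f g)+
  have "cmod (L2_inner {a..b} f g) \<le> integral {a..b} (\<lambda>x. ((cmod (f x))\<^sup>2 + (cmod (g x))\<^sup>2) / 2)"
    unfolding L2_inner_def
  proof (rule integral_norm_bound_integral)
    show "(\<lambda>x. f x * cnj (g x)) integrable_on {a..b}"
      using has_integral_L2_inner[OF f g] by blast
    show "(\<lambda>x. ((cmod (f x))\<^sup>2 + (cmod (g x))\<^sup>2) / 2) integrable_on {a..b}"
      by (intro integrable_continuous_real continuous_intros f g) simp
    show "cmod (f x * cnj (g x)) \<le> ((cmod (f x))\<^sup>2 + (cmod (g x))\<^sup>2) / 2" for x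
      using sum_squares_bound[of "cmod (f x)" "cmod (g x)"]
      by (simp add: norm_mult power2_eq_square)
  qed
  also have "\<dots> = (L2_norm2 {a..b} f + L2_norm2 {a..b} g) / 2"
    unfolding L2_norm2_def integral_divide integral_add[OF sq] ..
  finally show ?thesis .
qed

lemma L2_norm2_eq_0_imp_zero:
  assumes "a < b" "continuous_on {a..b} f" "L2_norm2 {a..b} f = 0" "x \<in> {a..b}"
  shows "f x = 0"
proof -
  have c: "continuous_on {a..b} (\<lambda>x. (cmod (f x))\<^sup>2)"
    by (intro continuous_intros assms)
  have "((\<lambda>x. (cmod (f x))\<^sup>2) has_integral 0) (cbox a b)"
    using integrable_integral[OF integrable_continuous_real[OF c]] assms(3)
    by (simp add: L2_norm2_def)
  from has_integral_0_cbox_imp_0[OF _ _ this, of x] c assms show ?thesis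
    by simp
qed

lemma has_integral_product_rule_cnj:
  fixes f g f' g' :: "real \<Rightarrow> complex"
  assumes "a \<le> b"
    and f: "\<And>x. x \<in> {a..b} \<Longrightarrow> (f has_vector_derivative f' x) (at x within {a..b})"
    and g: "\<And>x. x \<in> {a..b} \<Longrightarrow> (g has_vector_derivative g' x) (at x within {a..b})"
  shows "((\<lambda>x. f x * cnj (g' x) + f' x * cnj (g x))
           has_integral f b * cnj (g b) - f a * cnj (g a)) {a..b}"
  by (rule fundamental_theorem_of_calculus[OF \<open>a \<le> b\<close>])
     (intro has_vector_derivative_mult has_vector_derivative_cnj f g)

lemma continuous_on_if_has_vector_derivative:
  assumes "\<And>x. x \<in> S \<Longrightarrow> (f has_vector_derivative f' x) (at x within S)"
  shows "continuous_on S f"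
  using assms has_vector_derivative_continuous continuous_on_eq_continuous_within by blast

(* For small c > 0 a thin sector around the negative real axis; mu lies near the imaginary
   axis exactly when left_sector c (mu^2). *)
definition left_sector :: "real \<Rightarrow> complex \<Rightarrow> bool" where
  "left_sector c z \<longleftrightarrow> \<bar>Im z\<bar> < c * cmod z \<and> Re z < c * cmod z"

lemma norm_divide_sub_one_less:
  fixes mu z :: complex
  assumes "cmod (mu - z) < e * cmod z"
  shows "cmod (mu / z - 1) < e"
proof -
  have "z \<noteq> 0"
    using assms by auto
  then have "mu / z - 1 = (mu - z) / z"
    by (simp add: field_simps)
  then show ?thesis
    using assms \<open>z \<noteq> 0\<close> by (simp add: norm_divide divide_less_eq)
qed

lemma left_sector_square_bounds:
  assumes "c \<le> 1/4" "left_sector c (mu\<^sup>2)"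
  shows "\<bar>Re mu\<bar> < c * cmod mu" "cmod mu < 2 * \<bar>Im mu\<bar>"
proof -
  have m2: "(cmod mu)\<^sup>2 = (Re mu)\<^sup>2 + (Im mu)\<^sup>2"
    by (rule cmod_power2)
  have im: "2 * \<bar>Re mu\<bar> * \<bar>Im mu\<bar> < c * (cmod mu)\<^sup>2"
    and re: "(Re mu)\<^sup>2 - (Im mu)\<^sup>2 < c * (cmod mu)\<^sup>2"
    using assms(2) by (simp_all add: left_sector_def norm_power Re_power2 Im_power2 abs_mult)
  have "0 \<le> 2 * \<bar>Re mu\<bar> * \<bar>Im mu\<bar>"
    by simp
  then have "0 < c * (cmod mu)\<^sup>2"
    using im by linarith
  then have "0 < cmod mu"
    by (auto simp: zero_less_mult_iff)
  have "c * (cmod mu)\<^sup>2 \<le> 1/4 * (cmod mu)\<^sup>2"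
    using assms(1) by (rule mult_right_mono) simp
  then have "(cmod mu)\<^sup>2 < 4 * (Im mu)\<^sup>2"
    using re m2 zero_le_power2[of "Im mu"] by linarith
  then have "(cmod mu)\<^sup>2 < (2 * \<bar>Im mu\<bar>)\<^sup>2"
    by (simp add: power_mult_distrib)
  then show im_large: "cmod mu < 2 * \<bar>Im mu\<bar>"
    by (rule power_less_imp_less_base) simp
  have "\<bar>Re mu\<bar> * cmod mu \<le> \<bar>Re mu\<bar> * (2 * \<bar>Im mu\<bar>)"
    using im_large by (intro mult_left_mono) auto
  also have "\<dots> < (c * cmod mu) * cmod mu"
    using im by (simp add: power2_eq_square mult_ac)
  finally show "\<bar>Re mu\<bar> < c * cmod mu"
    using \<open>0 < cmod mu\<close> by simp
qed

lemma left_sector_Re_bound: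
  assumes "c \<le> 1/4" "left_sector c mu"
  shows "cmod mu < - 2 * Re mu"
proof -
  have m2: "(cmod mu)\<^sup>2 = (Re mu)\<^sup>2 + (Im mu)\<^sup>2"
    by (rule cmod_power2)
  have im: "\<bar>Im mu\<bar> < c * cmod mu" and re: "Re mu < c * cmod mu"
    using assms(2) by (simp_all add: left_sector_def)
  have cm: "c * cmod mu \<le> cmod mu / 4"
    using mult_right_mono[OF assms(1) norm_ge_zero] by simp
  have "\<bar>Im mu\<bar>\<^sup>2 < (cmod mu / 4)\<^sup>2"
    using im cm by (intro power_strict_mono) auto
  then have "(cmod mu)\<^sup>2 < (2 * Re mu)\<^sup>2"
    using m2 by (simp add: power_divide power_mult_distrib)
      (use zero_le_power2[of "Im mu"] in linarith)
  then have "cmod mu < \<bar>2 * Re mu\<bar>"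
    using power_less_imp_less_base[of "cmod mu" 2 "\<bar>2 * Re mu\<bar>"] by simp
  then show ?thesis
    using re cm by linarith
qed

lemma abs_round_square_diff:
  fixes s :: real
  assumes "0 \<le> s"
  shows "\<bar>(of_int (round s))\<^sup>2 - s\<^sup>2\<bar> \<le> s + 1/4"
proof -
  have d: "\<bar>of_int (round s) - s\<bar> \<le> 1/2"
    by (rule of_int_round_abs_le)
  then have "\<bar>of_int (round s) + s\<bar> \<le> 2 * s + 1/2"
    using assms by linarith
  then have "\<bar>of_int (round s) - s\<bar> * \<bar>of_int (round s) + s\<bar> \<le> 1/2 * (2 * s + 1/2)"
    using d by (intro mult_mono) auto
  moreover have "(of_int (round s))\<^sup>2 - s\<^sup>2 = (of_int (round s) - s) * (of_int (round s) + s)"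
    by (simp add: power2_eq_square algebra_simps)
  ultimately show ?thesis
    by (simp add: abs_mult)
qed

lemma left_sector_square_near_imaginary_integer:
  assumes e: "0 < e" "e \<le> 1" and sector: "left_sector (e/4) (mu\<^sup>2)"
    and large: "2/e + 2 < cmod mu"
  shows "\<exists>n::int. n \<noteq> 0 \<and> cmod (mu / (\<i> * of_int n) - 1) < e"
proof -
  have re: "\<bar>Re mu\<bar> < e/4 * cmod mu" and im: "cmod mu < 2 * \<bar>Im mu\<bar>"
    using left_sector_square_bounds[OF _ sector] e by simp_all
  define n where "n = round (Im mu)"
  have round: "\<bar>of_int n - Im mu\<bar> \<le> 1/2"
    unfolding n_def by (rule of_int_round_abs_le)
  have large': "2 + 2 * e < e * cmod mu"
    using mult_strict_left_mono[OF large e(1)] e by (simp add: distrib_left)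
  have "cmod (mu - \<i> * of_int n) \<le> \<bar>Re mu\<bar> + \<bar>Im mu - of_int n\<bar>"
    using cmod_le[of "mu - \<i> * of_int n"] by simp
  also have "\<dots> < e/4 * cmod mu + 1/2"
    using re round by linarith
  also have "\<dots> \<le> e * (cmod mu / 2 - 1/2)"
    using large' by (simp add: algebra_simps)
  also have "\<dots> < e * \<bar>of_int n\<bar>"
    using im round e by (intro mult_strict_left_mono) linarith+
  finally have close: "cmod (mu - \<i> * of_int n) < e * cmod (\<i> * of_int n)"
    by (simp add: norm_mult)
  then have "n \<noteq> 0"
    by auto
  with norm_divide_sub_one_less[OF close] show ?thesis
    by blast
qed

lemma left_sector_near_neg_square_integer:
  assumes e: "0 < e" "e \<le> 1" and sector: "left_sector (e/4) mu"
    and large: "2 * (4/e + 1)\<^sup>2 < cmod mu"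
  shows "\<exists>n::int. n \<noteq> 0 \<and> cmod (mu / (- (of_int n)\<^sup>2) - 1) < e"
proof -
  have re: "cmod mu < - 2 * Re mu"
    using left_sector_Re_bound[OF _ sector] e by simp
  have im: "\<bar>Im mu\<bar> < e/4 * cmod mu"
    using sector by (simp add: left_sector_def)
  define s where "s = sqrt (- Re mu)"
  have "Re mu \<le> 0"
    using re norm_ge_zero[of mu] by linarith
  then have s2: "s\<^sup>2 = - Re mu" and "0 \<le> s"
    unfolding s_def by simp_all
  have "(4/e + 1)\<^sup>2 < s\<^sup>2"
    using large re s2 by linarith
  then have s_large: "4/e + 1 < s"
    using power_less_imp_less_base \<open>0 \<le> s\<close> by blast
  moreover have "0 < 4/e"
    using e by simp
  ultimately have "1 \<le> s"
    by linarith
  define n where "n = round s"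
  have n_large: "s - 1/2 \<le> of_int n"
    using of_int_round_abs_le[of s] unfolding n_def by linarith
  have "e * s * (4/e + 1) \<le> e * s * s"
    using s_large e \<open>0 \<le> s\<close> by (intro mult_left_mono) auto
  then have quadratic: "4 * s + e * s \<le> e * (s * s)"
    using e by (simp add: algebra_simps)
  have "e * s \<le> s"
    using e \<open>0 \<le> s\<close> by (simp add: mult_left_le_one_le)
  moreover have "e * (s - 1/2)\<^sup>2 = e * (s * s) - e * s + e/4" "e/2 * s\<^sup>2 = e * (s * s) / 2"
    by (simp_all add: power2_eq_square algebra_simps)
  ultimately have key: "s + 1/4 + e/2 * s\<^sup>2 \<le> e * (s - 1/2)\<^sup>2"
    using quadratic \<open>1 \<le> s\<close> e by linarith
  have "cmod (mu + (of_int n)\<^sup>2) \<le> \<bar>Re mu + (of_int n)\<^sup>2\<bar> + \<bar>Im mu\<bar>"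
    using cmod_le[of "mu + (of_int n)\<^sup>2"] by simp
  also have "\<dots> < s + 1/4 + e/4 * cmod mu"
    using abs_round_square_diff[OF \<open>0 \<le> s\<close>] s2 im unfolding n_def by simp
  also have "\<dots> \<le> s + 1/4 + e/4 * (2 * s\<^sup>2)"
    using re s2 e by (intro add_left_mono mult_left_mono) auto
  also have "\<dots> = s + 1/4 + e/2 * s\<^sup>2"
    by simp
  also have "\<dots> \<le> e * (s - 1/2)\<^sup>2"
    by (rule key)
  also have "\<dots> \<le> e * (of_int n)\<^sup>2"
    using n_large \<open>1 \<le> s\<close> e by (intro mult_left_mono power_mono) auto
  finally have close: "cmod (mu - - (of_int n)\<^sup>2) < e * cmod (- (of_int n)\<^sup>2 :: complex)"
    by (simp add: norm_power)
  then have "n \<noteq> 0"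
    by auto
  with norm_divide_sub_one_less[OF close] show ?thesis
    by blast
qed

lemma not_left_sector_bound:
  fixes z w :: complex and N P c :: real
  assumes "0 \<le> N" "0 \<le> P" and eq: "z * of_real N + of_real P + w = 0"
    and "\<not> left_sector c z"
  shows "c * cmod z * N \<le> cmod w"
proof -
  have im: "Im z * N + Im w = 0" and re: "Re z * N + P + Re w = 0"
    using arg_cong[OF eq, of Im] arg_cong[OF eq, of Re] by simp_all
  consider "c * cmod z \<le> \<bar>Im z\<bar>" | "c * cmod z \<le> Re z"
    using \<open>\<not> left_sector c z\<close> unfolding left_sector_def by linarith
  then show ?thesis
  proof cases
    case 1
    then have "c * cmod z * N \<le> \<bar>Im z\<bar> * N"
      using \<open>0 \<le> N\<close> by (rule mult_right_mono)
    also have "\<dots> = \<bar>Im w\<bar>"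
    proof -
      have "Im w = - (Im z * N)" using im by linarith
      then show ?thesis using \<open>0 \<le> N\<close> by (simp add: abs_mult)
    qed
    finally show ?thesis
      using abs_Im_le_cmod[of w] by linarith
  next
    case 2
    then have "c * cmod z * N \<le> Re z * N"
      using \<open>0 \<le> N\<close> by (rule mult_right_mono)
    then show ?thesis
      using re \<open>0 \<le> P\<close> abs_Re_le_cmod[of w] by linarith
  qed
qed

lemma energy_vanishes_outside_sectors:
  fixes mu X Y :: complex and \<gamma> c Nv Nw NT AT :: real
  assumes nonneg: "0 \<le> Nv" "0 \<le> Nw" "0 \<le> NT" "0 \<le> AT"
    and E1: "mu * of_real Nv + cnj mu * of_real Nw + of_real \<gamma> * X = 0"
    and E2: "of_real AT + mu * of_real NT - of_real \<gamma> * Y = 0"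
    and X_bound: "cmod X \<le> (Nv + NT) / 2" and Y_bound: "cmod Y \<le> (Nv + NT) / 2"
    and large: "\<bar>\<gamma>\<bar> < c * cmod mu"
    and sectors: "\<not> left_sector c mu" "\<not> left_sector c (mu\<^sup>2)"
  shows "Nv = 0 \<and> Nw = 0 \<and> NT = 0"
proof -
  have "0 < c * cmod mu"
    using large abs_ge_zero[of \<gamma>] by linarith
  then have mu_pos: "0 < cmod mu"
    by (auto simp: zero_less_mult_iff)
  have "mu\<^sup>2 * of_real Nv + of_real ((cmod mu)\<^sup>2 * Nw) + of_real \<gamma> * mu * X = 0"
    using arg_cong[OF E1, of "(*) mu"] complex_norm_square[of mu]
    by (simp add: algebra_simps power2_eq_square)
  from not_left_sector_bound[OF _ _ this sectors(2)] nonneg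
  have "cmod mu * (c * cmod mu * Nv) \<le> cmod mu * (\<bar>\<gamma>\<bar> * cmod X)"
    by (simp add: norm_mult norm_power power2_eq_square mult_ac)
  then have Nv_bound: "c * cmod mu * Nv \<le> \<bar>\<gamma>\<bar> * cmod X"
    using mu_pos by simp
  have "mu * of_real NT + of_real AT + - (of_real \<gamma> * Y) = 0"
    using E2 by (simp add: algebra_simps)
  from not_left_sector_bound[OF _ _ this sectors(1)] nonneg
  have NT_bound: "c * cmod mu * NT \<le> \<bar>\<gamma>\<bar> * cmod Y"
    by (simp add: norm_mult)
  have "c * cmod mu * (Nv + NT) \<le> \<bar>\<gamma>\<bar> * (Nv + NT)"
    using Nv_bound NT_bound mult_left_mono[OF X_bound, of "\<bar>\<gamma>\<bar>"]
      mult_left_mono[OF Y_bound, of "\<bar>\<gamma>\<bar>"]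
    by (simp add: algebra_simps)
  then have "Nv + NT \<le> 0"
    using large by (meson mult_le_cancel_right not_le)
  then have "Nv = 0" "NT = 0"
    using nonneg by linarith+
  moreover have "mu \<noteq> 0"
    using mu_pos by auto
  ultimately show ?thesis
    using E1 X_bound by auto
qed

definition thermo_eigen_ode ::
  "real \<Rightarrow> complex \<Rightarrow> (real \<Rightarrow> complex) \<Rightarrow> (real \<Rightarrow> complex) \<Rightarrow> (real \<Rightarrow> complex)
     \<Rightarrow> (real \<Rightarrow> complex) \<Rightarrow> (real \<Rightarrow> complex) \<Rightarrow> (real \<Rightarrow> complex) \<Rightarrow> (real \<Rightarrow> complex) \<Rightarrow> bool"
where
  "thermo_eigen_ode \<gamma> mu w v th w' v' th' th'' \<longleftrightarrow>
     (\<forall>x\<in>{0..pi}.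
        (w has_vector_derivative w' x) (at x within {0..pi}) \<and>
        (v has_vector_derivative v' x) (at x within {0..pi}) \<and>
        (th has_vector_derivative th' x) (at x within {0..pi}) \<and>
        (th' has_vector_derivative th'' x) (at x within {0..pi}) \<and>
        v' x = mu * w x \<and>
        w' x - complex_of_real \<gamma> * th x = mu * v x \<and>
        complex_of_real \<gamma> * v x + th'' x = mu * th x)"

lemma thermo_eigenvalue_iff:
  "thermo_eigenvalue \<gamma> bc mu \<longleftrightarrow>
     (\<exists>w v th w' v' th' th''. thermo_eigen_ode \<gamma> mu w v th w' v' th' th'' \<and>
        thermo_boundary bc w v th th' \<and> (\<exists>x\<in>{0..pi}. w x \<noteq> 0 \<or> v x \<noteq> 0 \<or> th x \<noteq> 0))"
  unfolding thermo_eigenvalue_def thermo_eigen_ode_def by blast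

lemma thermo_boundary_products:
  assumes "thermo_boundary bc w v th th'"
  shows "w 0 * cnj (v 0) = 0" "w pi * cnj (v pi) = 0"
    and "th' 0 * cnj (th 0) = 0" "th' pi * cnj (th pi) = 0"
  using assms by (cases bc; simp add: thermo_boundary_def)+

lemma thermo_eigen_ode_continuous:
  assumes "thermo_eigen_ode \<gamma> mu w v th w' v' th' th''"
  shows "continuous_on {0..pi} w" "continuous_on {0..pi} v"
    and "continuous_on {0..pi} th" "continuous_on {0..pi} th'"
  using assms unfolding thermo_eigen_ode_def
  by (auto intro!: continuous_on_if_has_vector_derivative)

lemma thermo_energy_identity_elastic:
  assumes eig: "thermo_eigen_ode \<gamma> mu w v th w' v' th' th''"
    and boundary: "w 0 * cnj (v 0) = 0" "w pi * cnj (v pi) = 0"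
  shows "mu * of_real (L2_norm2 {0..pi} v) + cnj mu * of_real (L2_norm2 {0..pi} w)
           + of_real \<gamma> * L2_inner {0..pi} th v = 0"
proof -
  note ode = eig[unfolded thermo_eigen_ode_def, rule_format]
  note cont = thermo_eigen_ode_continuous[OF eig]
  have "((\<lambda>x. w x * cnj (v' x) + w' x * cnj (v x))
          has_integral w pi * cnj (v pi) - w 0 * cnj (v 0)) {0..pi}"
    by (rule has_integral_product_rule_cnj) (use ode pi_ge_zero in blast)+
  then have "((\<lambda>x. w x * cnj (v' x) + w' x * cnj (v x)) has_integral 0) {0..pi}"
    by (simp only: boundary diff_self)
  moreover have "((\<lambda>x. w x * cnj (v' x) + w' x * cnj (v x)) has_integral
      cnj mu * L2_inner {0..pi} w w + mu * L2_inner {0..pi} v v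
        + of_real \<gamma> * L2_inner {0..pi} th v) {0..pi}"
  proof (rule has_integral_eq[rotated])
    show "((\<lambda>x. cnj mu * (w x * cnj (w x)) + mu * (v x * cnj (v x))
            + of_real \<gamma> * (th x * cnj (v x)))
        has_integral cnj mu * L2_inner {0..pi} w w + mu * L2_inner {0..pi} v v
          + of_real \<gamma> * L2_inner {0..pi} th v) {0..pi}"
      by (intro has_integral_add has_integral_mult_right has_integral_L2_inner cont)
    show "cnj mu * (w x * cnj (w x)) + mu * (v x * cnj (v x)) + of_real \<gamma> * (th x * cnj (v x))
        = w x * cnj (v' x) + w' x * cnj (v x)" if "x \<in> {0..pi}" for x
    proof -
      have "v' x = mu * w x" "w' x = mu * v x + of_real \<gamma> * th x"
        using ode[OF that] by (simp_all add: diff_eq_eq)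
      then show ?thesis
        by (simp add: algebra_simps)
    qed
  qed
  ultimately have "0 = cnj mu * L2_inner {0..pi} w w + mu * L2_inner {0..pi} v v
      + of_real \<gamma> * L2_inner {0..pi} th v"
    by (rule has_integral_unique)
  then show ?thesis
    by (simp add: L2_inner_self cont add.commute)
qed

lemma thermo_energy_identity_thermal:
  assumes eig: "thermo_eigen_ode \<gamma> mu w v th w' v' th' th''"
    and boundary: "th' 0 * cnj (th 0) = 0" "th' pi * cnj (th pi) = 0"
  shows "of_real (L2_norm2 {0..pi} th') + mu * of_real (L2_norm2 {0..pi} th)
           - of_real \<gamma> * L2_inner {0..pi} v th = 0"
proof -
  note ode = eig[unfolded thermo_eigen_ode_def, rule_format]
  note cont = thermo_eigen_ode_continuous[OF eig]
  have "((\<lambda>x. th' x * cnj (th' x) + th'' x * cnj (th x))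
          has_integral th' pi * cnj (th pi) - th' 0 * cnj (th 0)) {0..pi}"
    by (rule has_integral_product_rule_cnj) (use ode pi_ge_zero in blast)+
  then have "((\<lambda>x. th' x * cnj (th' x) + th'' x * cnj (th x)) has_integral 0) {0..pi}"
    by (simp only: boundary diff_self)
  moreover have "((\<lambda>x. th' x * cnj (th' x) + th'' x * cnj (th x)) has_integral
      L2_inner {0..pi} th' th' + mu * L2_inner {0..pi} th th
        - of_real \<gamma> * L2_inner {0..pi} v th) {0..pi}"
  proof (rule has_integral_eq[rotated])
    show "((\<lambda>x. th' x * cnj (th' x) + mu * (th x * cnj (th x)) - of_real \<gamma> * (v x * cnj (th x)))
        has_integral L2_inner {0..pi} th' th' + mu * L2_inner {0..pi} th th
          - of_real \<gamma> * L2_inner {0..pi} v th) {0..pi}"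
      by (intro has_integral_add has_integral_diff has_integral_mult_right
          has_integral_L2_inner cont)
    show "th' x * cnj (th' x) + mu * (th x * cnj (th x)) - of_real \<gamma> * (v x * cnj (th x))
        = th' x * cnj (th' x) + th'' x * cnj (th x)" if "x \<in> {0..pi}" for x
    proof -
      have "th'' x = mu * th x - of_real \<gamma> * v x"
        using ode[OF that] by (simp add: eq_diff_eq add.commute)
      then show ?thesis
        by (simp only:) (simp add: algebra_simps)
    qed
  qed
  ultimately have "0 = L2_inner {0..pi} th' th' + mu * L2_inner {0..pi} th th
      - of_real \<gamma> * L2_inner {0..pi} v th"
    by (rule has_integral_unique)
  then show ?thesis
    by (simp add: L2_inner_self cont)
qed

lemma thermo_eigenvalue_in_sectors:
  assumes "thermo_eigenvalue \<gamma> bc mu" and large: "\<bar>\<gamma>\<bar> < c * cmod mu"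
  shows "left_sector c mu \<or> left_sector c (mu\<^sup>2)"
proof (rule ccontr)
  assume sectors: "\<not> (left_sector c mu \<or> left_sector c (mu\<^sup>2))"
  obtain w v th w' v' th' th'' where eig: "thermo_eigen_ode \<gamma> mu w v th w' v' th' th''"
    and bc: "thermo_boundary bc w v th th'"
    and nonzero: "\<exists>x\<in>{0..pi}. w x \<noteq> 0 \<or> v x \<noteq> 0 \<or> th x \<noteq> 0"
    using assms(1) unfolding thermo_eigenvalue_iff by blast
  note cont = thermo_eigen_ode_continuous[OF eig]
  have "L2_norm2 {0..pi} v = 0 \<and> L2_norm2 {0..pi} w = 0 \<and> L2_norm2 {0..pi} th = 0"
  proof (rule energy_vanishes_outside_sectors[OF L2_norm2_nonneg L2_norm2_nonneg L2_norm2_nonneg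
        L2_norm2_nonneg _ _ _ _ large])
    show "mu * of_real (L2_norm2 {0..pi} v) + cnj mu * of_real (L2_norm2 {0..pi} w)
        + of_real \<gamma> * L2_inner {0..pi} th v = 0"
      by (rule thermo_energy_identity_elastic[OF eig thermo_boundary_products(1,2)[OF bc]])
    show "of_real (L2_norm2 {0..pi} th') + mu * of_real (L2_norm2 {0..pi} th)
        - of_real \<gamma> * L2_inner {0..pi} v th = 0"
      by (rule thermo_energy_identity_thermal[OF eig thermo_boundary_products(3,4)[OF bc]])
    show "cmod (L2_inner {0..pi} th v) \<le> (L2_norm2 {0..pi} v + L2_norm2 {0..pi} th) / 2"
      using L2_inner_norm_le[OF cont(3,2)] by (simp add: add.commute)
    show "cmod (L2_inner {0..pi} v th) \<le> (L2_norm2 {0..pi} v + L2_norm2 {0..pi} th) / 2"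
      using L2_inner_norm_le[OF cont(2,3)] .
  qed (use sectors in auto)
  then show False
    using nonzero L2_norm2_eq_0_imp_zero[OF pi_gt_zero] cont by metis
qed

lemma thermo_eigenvalue_near_imaginary_or_neg_square:
  assumes e: "0 < e" "e \<le> 1" and eig: "thermo_eigenvalue \<gamma> bc mu"
    and large: "max (\<bar>\<gamma>\<bar> / (e/4)) (max (2/e + 2) (2 * (4/e + 1)\<^sup>2)) < cmod mu"
  shows "\<exists>n::int. n \<noteq> 0 \<and>
           (cmod (mu / (\<i> * of_int n) - 1) < e \<or> cmod (mu / (- (of_int n)\<^sup>2) - 1) < e)"
proof -
  have "\<bar>\<gamma>\<bar> < e/4 * cmod mu"
    using large e by (simp add: field_simps)
  then consider "left_sector (e/4) (mu\<^sup>2)" | "left_sector (e/4) mu"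
    using thermo_eigenvalue_in_sectors[OF eig] by blast
  then show ?thesis
  proof cases
    case 1
    with left_sector_square_near_imaginary_integer[OF e] large show ?thesis
      by fastforce
  next
    case 2
    with left_sector_near_neg_square_integer[OF e] large show ?thesis
      by fastforce
  qed
qed

theorem theorem4p3:
  fixes \<gamma> :: real and b :: thermo_bc
  assumes "\<gamma> > 0"
  shows "\<forall>\<epsilon>>0. \<exists>R. \<forall>mu. thermo_eigenvalue \<gamma> b mu \<and> cmod mu > R \<longrightarrow>
           (\<exists>n::int. n \<noteq> 0 \<and>
              (cmod (mu / (\<i> * of_int n) - 1) < \<epsilon> \<or>
               cmod (mu / (- (of_int n)\<^sup>2) - 1) < \<epsilon>))"
proof (intro allI impI)
  fix \<epsilon> :: real
  assume "\<epsilon> > 0"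
  define e where "e = min \<epsilon> 1"
  have e: "0 < e" "e \<le> 1" "e \<le> \<epsilon>"
    using \<open>\<epsilon> > 0\<close> by (auto simp: e_def)
  show "\<exists>R. \<forall>mu. thermo_eigenvalue \<gamma> b mu \<and> cmod mu > R \<longrightarrow>
           (\<exists>n::int. n \<noteq> 0 \<and>
              (cmod (mu / (\<i> * of_int n) - 1) < \<epsilon> \<or>
               cmod (mu / (- (of_int n)\<^sup>2) - 1) < \<epsilon>))"
  proof (intro exI[of _ "max (\<bar>\<gamma>\<bar> / (e/4)) (max (2/e + 2) (2 * (4/e + 1)\<^sup>2))"] allI impI)
    fix mu
    assume "thermo_eigenvalue \<gamma> b mu \<and>
      max (\<bar>\<gamma>\<bar> / (e/4)) (max (2/e + 2) (2 * (4/e + 1)\<^sup>2)) < cmod mu"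
    with thermo_eigenvalue_near_imaginary_or_neg_square[OF e(1,2)] e(3)
    show "\<exists>n::int. n \<noteq> 0 \<and>
            (cmod (mu / (\<i> * of_int n) - 1) < \<epsilon> \<or> cmod (mu / (- (of_int n)\<^sup>2) - 1) < \<epsilon>)"
      by fastforce
  qed
qed

end
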